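(* The semirings $\mathbb{R}_{\min}$ and $\mathbb{R}_{\max}$ are fully elementary. Their symmetrizations $\tilde{\mathcal{S}}(\mathbb{R}_{\min})$ and $\tilde{\mathcal{S}}(\mathbb{R}_{\max})$ are not fully elementary.
   Context: $\mathbb{R}_{\min}=\mathbb{R}\cup\{+\infty\}$ with addition $\min$ (zero $+\infty$) and multiplication the usual $+$ (unit $0$); $\mathbb{R}_{\max}=\mathbb{R}\cup\{-\infty\}$ with addition $\max$ and multiplication $+$. For a semiring $X$, $\mathcal{S}(X)=X\times X$ with $(a',a'')+(b',b'')=(a'+b',a''+b'')$ and $(a',a'')\cdot(b',b'')=(a'b'+a''b'',a'b''+a''b')$. The relation $\sim$ on $\mathcal{S}(X)$ is: $(a',a'')\sim(b',b'')$ iff $(a',a'')=(b',b'')$, or ($a'\ne a''$, $b'\ne b''$ and $a'+b''=a''+b'$). When $\sim$ is a congruence, the symmetrization is the quotient semiring $\tilde{\mathcal{S}}(X)=\mathcal{S}(X)/\sim$. Polynomials over a unital commutative semiring $X$ in $n$ variables are functions $X^n\to X$ represented by formal expressions $\sum_k a_k\prod_j x_j^{d_{k,j}}$; a polynomial is symmetric if represented by an expression closed (with coefficients) under permuting variables. $e_j$ is the sum of all products of $j$ distinct variables. $X$ is fully elementary if for every $n$ every symmetric polynomial $p$ in $n$ variables equals $r(e_1,\dots,e_n)$ as functions on $X^n$ for some polynomial $r$. *)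

theory Defs
  imports Complex_Main "HOL-Library.Extended_Real" "HOL-Library.Multiset"
    "HOL-Combinatorics.Permutations"
begin

record 'a srng =
  car  :: "'a set"
  sadd :: "'a \<Rightarrow> 'a \<Rightarrow> 'a"
  smul :: "'a \<Rightarrow> 'a \<Rightarrow> 'a"
  szero :: 'a
  sone :: 'a

definition Rmin :: "ereal srng" where
  "Rmin = \<lparr>car = {x. x \<noteq> -\<infinity>}, sadd = min, smul = (+), szero = \<infinity>, sone = 0\<rparr>"

definition Rmax :: "ereal srng" where
  "Rmax = \<lparr>car = {x. x \<noteq> \<infinity>}, sadd = max, smul = (+), szero = -\<infinity>, sone = 0\<rparr>"

definition Ssym :: "'a srng \<Rightarrow> ('a \<times> 'a) srng" where
  "Ssym X = \<lparr>car = car X \<times> car X,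
     sadd = (\<lambda>(a1,a2) (b1,b2). (sadd X a1 b1, sadd X a2 b2)),
     smul = (\<lambda>(a1,a2) (b1,b2). (sadd X (smul X a1 b1) (smul X a2 b2),
                                 sadd X (smul X a1 b2) (smul X a2 b1))),
     szero = (szero X, szero X),
     sone = (sone X, szero X)\<rparr>"

definition sim_rel :: "'a srng \<Rightarrow> (('a \<times> 'a) \<times> ('a \<times> 'a)) set" where
  "sim_rel X = {(a, b). a \<in> car X \<times> car X \<and> b \<in> car X \<times> car X \<and>
      (a = b \<or> (fst a \<noteq> snd a \<and> fst b \<noteq> snd b \<and>
                sadd X (fst a) (snd b) = sadd X (snd a) (fst b)))}"

text \<open>The symmetrization: quotient of S(X) by ~ (operations via representatives;
  meaningful when ~ is a congruence).\<close>
definition Symz :: "'a srng \<Rightarrow> ('a \<times> 'a) set srng" where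
  "Symz X = \<lparr>car = car (Ssym X) // sim_rel X,
     sadd = (\<lambda>A B. sim_rel X `` {sadd (Ssym X) (SOME a. a \<in> A) (SOME b. b \<in> B)}),
     smul = (\<lambda>A B. sim_rel X `` {smul (Ssym X) (SOME a. a \<in> A) (SOME b. b \<in> B)}),
     szero = sim_rel X `` {szero (Ssym X)},
     sone = sim_rel X `` {sone (Ssym X)}\<rparr>"

text \<open>Formal polynomial expressions in n variables: lists of terms (coefficient,
  exponent vector of length n), representing sum_k a_k prod_j x_j^(d_kj).\<close>
type_synonym 'a fpoly = "('a \<times> nat list) list"

definition spow :: "'a srng \<Rightarrow> 'a \<Rightarrow> nat \<Rightarrow> 'a" where
  "spow R a k = (smul R a ^^ k) (sone R)"

definition mono_eval :: "'a srng \<Rightarrow> nat list \<Rightarrow> 'a list \<Rightarrow> 'a" where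
  "mono_eval R d x = foldr (smul R) (map2 (\<lambda>di xi. spow R xi di) d x) (sone R)"

definition poly_eval :: "'a srng \<Rightarrow> 'a fpoly \<Rightarrow> 'a list \<Rightarrow> 'a" where
  "poly_eval R p x = foldr (sadd R) (map (\<lambda>(c, d). smul R c (mono_eval R d x)) p) (szero R)"

definition is_fpoly :: "'a srng \<Rightarrow> nat \<Rightarrow> 'a fpoly \<Rightarrow> bool" where
  "is_fpoly R n p \<longleftrightarrow> (\<forall>(c, d) \<in> set p. c \<in> car R \<and> length d = n)"

definition perm_exp :: "nat \<Rightarrow> (nat \<Rightarrow> nat) \<Rightarrow> nat list \<Rightarrow> nat list" where
  "perm_exp n \<sigma> d = map (\<lambda>j. d ! \<sigma> j) [0..<n]"

definition sym_fpoly :: "'a srng \<Rightarrow> nat \<Rightarrow> 'a fpoly \<Rightarrow> bool" where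
  "sym_fpoly R n p \<longleftrightarrow> is_fpoly R n p \<and>
     (\<forall>\<sigma>. \<sigma> permutes {..<n} \<longrightarrow>
        mset (map (\<lambda>(c, d). (c, perm_exp n \<sigma> d)) p) = mset p)"

definition elem_sym :: "'a srng \<Rightarrow> nat \<Rightarrow> nat \<Rightarrow> 'a list \<Rightarrow> 'a" where
  "elem_sym R n j x = foldr (sadd R)
     (map (\<lambda>l. foldr (smul R) (map (\<lambda>i. x ! i) l) (sone R))
          (filter (\<lambda>l. length l = j) (subseqs [0..<n]))) (szero R)"

definition fully_elementary :: "'a srng \<Rightarrow> bool" where
  "fully_elementary R \<longleftrightarrow>
    (\<forall>n p. sym_fpoly R n p \<longrightarrow>
       (\<exists>r. is_fpoly R n r \<and>
          (\<forall>x. length x = n \<and> set x \<subseteq> car R \<longrightarrow>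
             poly_eval R p x = poly_eval R r (map (\<lambda>j. elem_sym R n (Suc j) x) [0..<n]))))"

end

theory Submission
  imports Defs
begin

text \<open>
  A symmetric polynomial over R_min is a minimum of terms c + <d o sigma, x> over whole orbits of
  exponent vectors. By the rearrangement inequality the minimum over an orbit pairs the largest
  exponents with the smallest entries of x, and slicing d into layers writes this value as
  sum_t e_{d'_t}(x), where d' is the conjugate partition of d and e_m(x) is the sum of the m
  smallest entries of x. So every orbit is a monomial in the elementary symmetric polynomials.
  Negation is an isomorphism from R_min onto R_max; it transfers this result to R_max and
  identifies the two symmetrizations.

  In the symmetrization of R_min a class is determined by its modulus min(a', a'') and by being
  positive, negative or balanced. If x^2 + y^2 (with positive unit coefficients) were r(e_1, e_2),
  we could lift r to S(R_min). Writing a^+ = (a, inf) and a^- = (inf, a), a term c e_1^i e_2^j of modulus v takes the moduli v - i - 2j,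
  v + i + 2j and v + j at the points ((-1)^+, (-1)^-), (1^+, 1^-) and (0^+, 1^+). Since the value
  of x^2 + y^2 there is positive with modulus -2, 2 and 0, every term is at least -2 at the first
  point, at least 2 at the second one (strictly if i > 0, because e_1 is balanced there), and some
  term is at most 0 at the third point. Adding the first two bounds gives v >= 0, strictly if i > 0,
  so the third one forces i = j = v = 0, which violates the second.
\<close>

section \<open>Semiring morphisms and polynomial evaluation\<close>

lemma set_subseqs_upt_subset:
  assumes "l \<in> set (subseqs [0..<n])"
  shows "set l \<subseteq> {..<n}"
proof -
  from assms have "set l \<in> Pow {0..<n}"
    using subseqs_powset[of "[0..<n]"] by auto
  then show ?thesis by (auto simp: lessThan_atLeast0)
qed

locale closed_srng =
  fixes R :: "'a srng"
  assumes sadd_closed: "a \<in> car R \<Longrightarrow> b \<in> car R \<Longrightarrow> sadd R a b \<in> car R"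
    and smul_closed: "a \<in> car R \<Longrightarrow> b \<in> car R \<Longrightarrow> smul R a b \<in> car R"
    and szero_closed: "szero R \<in> car R"
    and sone_closed: "sone R \<in> car R"
begin

lemma spow_closed: "a \<in> car R \<Longrightarrow> spow R a k \<in> car R"
  by (induction k) (simp_all add: spow_def sone_closed smul_closed)

lemma foldr_smul_closed: "set l \<subseteq> car R \<Longrightarrow> foldr (smul R) l (sone R) \<in> car R"
  by (induction l) (simp_all add: sone_closed smul_closed)

lemma foldr_sadd_closed: "set l \<subseteq> car R \<Longrightarrow> foldr (sadd R) l (szero R) \<in> car R"
  by (induction l) (simp_all add: szero_closed sadd_closed)

lemma set_map2_spow_subset: "set x \<subseteq> car R \<Longrightarrow> set (map2 (\<lambda>di xi. spow R xi di) d x) \<subseteq> car R"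
  by (auto simp: set_zip intro!: spow_closed)

lemma mono_eval_closed: "set x \<subseteq> car R \<Longrightarrow> mono_eval R d x \<in> car R"
  unfolding mono_eval_def by (intro foldr_smul_closed set_map2_spow_subset)

lemma poly_eval_closed: "set x \<subseteq> car R \<Longrightarrow> fst ` set p \<subseteq> car R \<Longrightarrow> poly_eval R p x \<in> car R"
  unfolding poly_eval_def
  by (intro foldr_sadd_closed) (auto intro!: smul_closed mono_eval_closed)

lemma elem_sym_closed:
  assumes "length x = n" "set x \<subseteq> car R"
  shows "elem_sym R n j x \<in> car R"
  unfolding elem_sym_def using assms
  by (intro foldr_sadd_closed) (fastforce intro!: foldr_smul_closed dest: set_subseqs_upt_subset)

end

lemma is_fpoly_coeffs: "is_fpoly R n p \<Longrightarrow> fst ` set p \<subseteq> car R"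
  by (auto simp: is_fpoly_def)

definition map_coeffs :: "('a \<Rightarrow> 'b) \<Rightarrow> 'a fpoly \<Rightarrow> 'b fpoly" where
  "map_coeffs f p = map (\<lambda>(c, d). (f c, d)) p"

lemma map_coeffs_map_coeffs: "map_coeffs f (map_coeffs g p) = map_coeffs (f \<circ> g) p"
  by (simp add: map_coeffs_def case_prod_unfold)

lemma map_coeffs_id_on: "(\<And>c. c \<in> fst ` set p \<Longrightarrow> f c = c) \<Longrightarrow> map_coeffs f p = p"
  by (force simp: map_coeffs_def intro!: map_idI)

lemma sym_fpoly_map_coeffs:
  assumes "sym_fpoly R n p" "\<And>c. c \<in> car R \<Longrightarrow> f c \<in> car R'"
  shows "sym_fpoly R' n (map_coeffs f p)"
  unfolding sym_fpoly_def
proof (intro conjI allI impI)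
  show "is_fpoly R' n (map_coeffs f p)"
    using assms by (auto simp: sym_fpoly_def is_fpoly_def map_coeffs_def)
next
  fix \<sigma> assume "\<sigma> permutes {..<n}"
  then have "mset (map (\<lambda>(c, d). (c, perm_exp n \<sigma> d)) p) = mset p"
    using assms(1) by (simp add: sym_fpoly_def)
  then have "image_mset (\<lambda>(c, d). (f c, d)) (mset (map (\<lambda>(c, d). (c, perm_exp n \<sigma> d)) p)) =
      image_mset (\<lambda>(c, d). (f c, d)) (mset p)"
    by simp
  then show "mset (map (\<lambda>(c, d). (c, perm_exp n \<sigma> d)) (map_coeffs f p)) = mset (map_coeffs f p)"
    by (simp add: map_coeffs_def case_prod_unfold image_mset.compositionality comp_def)
qed

locale srng_morphism = closed_srng R for R :: "'a srng" +
  fixes R' :: "'b srng" and h :: "'a \<Rightarrow> 'b"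
  assumes hom_closed: "a \<in> car R \<Longrightarrow> h a \<in> car R'"
    and hom_sadd: "a \<in> car R \<Longrightarrow> b \<in> car R \<Longrightarrow> h (sadd R a b) = sadd R' (h a) (h b)"
    and hom_smul: "a \<in> car R \<Longrightarrow> b \<in> car R \<Longrightarrow> h (smul R a b) = smul R' (h a) (h b)"
    and hom_szero: "h (szero R) = szero R'"
    and hom_sone: "h (sone R) = sone R'"
begin

lemma hom_spow: "a \<in> car R \<Longrightarrow> h (spow R a k) = spow R' (h a) k"
  by (induction k) (simp_all add: spow_def hom_sone hom_smul spow_closed[unfolded spow_def])

lemma hom_foldr_smul:
  "set l \<subseteq> car R \<Longrightarrow> h (foldr (smul R) l (sone R)) = foldr (smul R') (map h l) (sone R')"
  by (induction l) (simp_all add: hom_sone hom_smul foldr_smul_closed)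

lemma hom_foldr_sadd:
  "set l \<subseteq> car R \<Longrightarrow> h (foldr (sadd R) l (szero R)) = foldr (sadd R') (map h l) (szero R')"
  by (induction l) (simp_all add: hom_szero hom_sadd foldr_sadd_closed)

lemma hom_mono_eval:
  assumes "set x \<subseteq> car R"
  shows "h (mono_eval R d x) = mono_eval R' d (map h x)"
proof -
  have "map h (map2 (\<lambda>di xi. spow R xi di) d x) = map2 (\<lambda>di xi. spow R' xi di) d (map h x)"
    using assms
  proof (induction d arbitrary: x)
    case (Cons a d)
    then show ?case by (cases x) (auto simp: hom_spow)
  qed simp
  then show ?thesis
    unfolding mono_eval_def using hom_foldr_smul[OF set_map2_spow_subset[OF assms]] by simp
qed

lemma hom_poly_eval:
  assumes "set x \<subseteq> car R" "fst ` set p \<subseteq> car R"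
  shows "h (poly_eval R p x) = poly_eval R' (map_coeffs h p) (map h x)"
proof -
  have "map h (map (\<lambda>(c, d). smul R c (mono_eval R d x)) p) =
        map (\<lambda>(c, d). smul R' c (mono_eval R' d (map h x))) (map_coeffs h p)"
    using assms by (auto simp: map_coeffs_def hom_smul hom_mono_eval mono_eval_closed)
  moreover have "set (map (\<lambda>(c, d). smul R c (mono_eval R d x)) p) \<subseteq> car R"
    using assms by (auto intro!: smul_closed mono_eval_closed)
  ultimately show ?thesis
    unfolding poly_eval_def by (simp add: hom_foldr_sadd)
qed

lemma hom_elem_sym:
  assumes "length x = n" "set x \<subseteq> car R"
  shows "h (elem_sym R n j x) = elem_sym R' n j (map h x)"
proof -
  have sub: "set l \<subseteq> {..<n}" if "l \<in> set (subseqs [0..<n])" for l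
    using set_subseqs_upt_subset[OF that] .
  have "h (foldr (smul R) (map ((!) x) l) (sone R)) = foldr (smul R') (map ((!) (map h x)) l) (sone R')"
    if "l \<in> set (subseqs [0..<n])" for l
    using sub[OF that] assms
    by (subst hom_foldr_smul) (auto simp: subset_iff intro!: arg_cong[where f = "\<lambda>l. foldr _ l _"])
  moreover have "set (map (\<lambda>l. foldr (smul R) (map ((!) x) l) (sone R))
      (filter (\<lambda>l. length l = j) (subseqs [0..<n]))) \<subseteq> car R"
    using sub assms by (fastforce intro!: foldr_smul_closed)
  ultimately show ?thesis
    unfolding elem_sym_def
    by (simp add: hom_foldr_sadd) (intro arg_cong[where f = "\<lambda>l. foldr _ l _"] map_cong; simp)
qed

lemma hom_poly_eval_elem_sym:
  assumes "length x = n" "set x \<subseteq> car R" "fst ` set r \<subseteq> car R"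
  shows "h (poly_eval R r (map (\<lambda>j. elem_sym R n (Suc j) x) [0..<n])) =
    poly_eval R' (map_coeffs h r) (map (\<lambda>j. elem_sym R' n (Suc j) (map h x)) [0..<n])"
proof -
  have "set (map (\<lambda>j. elem_sym R n (Suc j) x) [0..<n]) \<subseteq> car R"
    using elem_sym_closed[OF assms(1,2)] by auto
  moreover have "map h (map (\<lambda>j. elem_sym R n (Suc j) x) [0..<n]) =
      map (\<lambda>j. elem_sym R' n (Suc j) (map h x)) [0..<n]"
    using hom_elem_sym[OF assms(1,2)] by simp
  ultimately show ?thesis
    using hom_poly_eval[OF _ assms(3)] by metis
qed

lemma fully_elementary_transfer:
  assumes fe: "fully_elementary R"
    and g_closed: "\<And>y. y \<in> car R' \<Longrightarrow> g y \<in> car R"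
    and h_g: "\<And>y. y \<in> car R' \<Longrightarrow> h (g y) = y"
  shows "fully_elementary R'"
  unfolding fully_elementary_def
proof (intro allI impI)
  fix n p' assume sym': "sym_fpoly R' n p'"
  let ?e = "\<lambda>S x. map (\<lambda>j. elem_sym S n (Suc j) x) [0..<n]"
  define p where "p = map_coeffs g p'"
  have p'_coeffs: "fst ` set p' \<subseteq> car R'"
    using sym' is_fpoly_coeffs unfolding sym_fpoly_def by blast
  then have p_coeffs: "fst ` set p \<subseteq> car R" and h_p: "map_coeffs h p = p'"
    using g_closed h_g by (force simp: p_def map_coeffs_def, auto simp: p_def map_coeffs_map_coeffs
        intro!: map_coeffs_id_on)
  have "sym_fpoly R n p"
    unfolding p_def using sym' g_closed by (rule sym_fpoly_map_coeffs)
  then obtain r where r: "is_fpoly R n r"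
    and p_r: "\<And>x. length x = n \<Longrightarrow> set x \<subseteq> car R \<Longrightarrow> poly_eval R p x = poly_eval R r (?e R x)"
    using fe unfolding fully_elementary_def by blast
  have "poly_eval R' p' x' = poly_eval R' (map_coeffs h r) (?e R' x')"
    if x': "length x' = n" "set x' \<subseteq> car R'" for x'
  proof -
    define x where "x = map g x'"
    have x: "length x = n" "set x \<subseteq> car R" and hx: "map h x = x'"
      using x' g_closed h_g by (auto simp: x_def intro!: map_idI)
    have "poly_eval R' p' x' = h (poly_eval R p x)"
      using hom_poly_eval[OF x(2) p_coeffs] by (simp add: h_p hx)
    also have "\<dots> = h (poly_eval R r (?e R x))"
      using p_r x by simp
    also have "\<dots> = poly_eval R' (map_coeffs h r) (?e R' x')"
      using hom_poly_eval_elem_sym[OF x is_fpoly_coeffs[OF r]] by (simp add: hx)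
    finally show ?thesis .
  qed
  moreover have "is_fpoly R' n (map_coeffs h r)"
    using r hom_closed by (auto simp: is_fpoly_def map_coeffs_def)
  ultimately show "\<exists>r. is_fpoly R' n r \<and> (\<forall>x. length x = n \<and> set x \<subseteq> car R' \<longrightarrow>
      poly_eval R' p' x = poly_eval R' r (?e R' x))"
    by blast
qed

end

locale srng_iso = srng_morphism R R' h for R :: "'a srng" and R' :: "'b srng" and h +
  fixes g :: "'b \<Rightarrow> 'a"
  assumes inv_closed: "y \<in> car R' \<Longrightarrow> g y \<in> car R"
    and hom_inv: "y \<in> car R' \<Longrightarrow> h (g y) = y"
    and inv_hom: "x \<in> car R \<Longrightarrow> g (h x) = x"
begin

lemma fully_elementary_iso: "fully_elementary R \<Longrightarrow> fully_elementary R'"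
  using fully_elementary_transfer inv_closed hom_inv by blast

lemma hom_eq_iff: "x \<in> car R \<Longrightarrow> y \<in> car R \<Longrightarrow> h x = h y \<longleftrightarrow> x = y"
  by (metis inv_hom)

end

section \<open>The tropical semirings\<close>

lemma Rmin_simps [simp]:
  "car Rmin = {x. x \<noteq> -\<infinity>}" "sadd Rmin = min" "smul Rmin = (+)" "szero Rmin = \<infinity>" "sone Rmin = 0"
  by (simp_all add: Rmin_def)

lemma closed_srng_Rmin: "closed_srng Rmin"
  by unfold_locales (auto simp: min_def)

lemma foldr_min_eq_Inf: "foldr min l (\<infinity>::ereal) = Inf (set l)"
  by (induction l) (auto simp: inf_min top_ereal_def)

lemma spow_Rmin: "spow Rmin a k = (\<Sum>t<k. a)"
  by (induction k) (simp_all add: spow_def add.commute)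

lemma mono_eval_Rmin:
  "length d = length x \<Longrightarrow> mono_eval Rmin d x = (\<Sum>i<length x. \<Sum>t<d!i. x!i)"
proof (induction d x rule: list_induct2)
  case (Cons k d a x)
  then show ?case
    by (simp add: mono_eval_def spow_Rmin sum.lessThan_Suc_shift del: sum.lessThan_Suc)
qed (simp add: mono_eval_def)

lemma poly_eval_Rmin: "poly_eval Rmin p x = (INF (c, d)\<in>set p. c + mono_eval Rmin d x)"
  by (simp add: poly_eval_def foldr_min_eq_Inf image_image case_prod_unfold)

lemma set_subseqs_upt_length:
  "set ` {l \<in> set (subseqs [0..<n]). length l = m} = {A. A \<subseteq> {..<n} \<and> card A = m}"
proof (intro equalityI subsetI)
  fix A assume "A \<in> set ` {l \<in> set (subseqs [0..<n]). length l = m}"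
  then obtain l where "l \<in> set (subseqs [0..<n])" "length l = m" "A = set l"
    by auto
  then show "A \<in> {A. A \<subseteq> {..<n} \<and> card A = m}"
    using set_subseqs_upt_subset subseqs_distinctD[of l "[0..<n]"] by (auto simp: distinct_card)
next
  fix A assume A: "A \<in> {A. A \<subseteq> {..<n} \<and> card A = m}"
  then obtain l where l: "l \<in> set (subseqs [0..<n])" "set l = A"
    using subset_subseqs[of A "[0..<n]"] by (auto simp: lessThan_atLeast0)
  then have "length l = m"
    using A subseqs_distinctD[of l "[0..<n]"] by (auto simp: distinct_card[symmetric])
  then show "A \<in> set ` {l \<in> set (subseqs [0..<n]). length l = m}"
    using l by blast
qed

lemma elem_sym_Rmin: "elem_sym Rmin n m x = (INF A\<in>{A. A \<subseteq> {..<n} \<and> card A = m}. \<Sum>i\<in>A. x!i)"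
proof -
  have "foldr (+) (map ((!) x) l) 0 = (\<Sum>i\<in>set l. x!i)" if "l \<in> set (subseqs [0..<n])" for l
    using subseqs_distinctD[OF that]
    by (simp add: sum_list.eq_foldr[symmetric] sum_list_distinct_conv_sum_set)
  then have "elem_sym Rmin n m x = (INF A\<in>set ` {l \<in> set (subseqs [0..<n]). length l = m}. \<Sum>i\<in>A. x!i)"
    by (simp add: elem_sym_def foldr_min_eq_Inf image_image)
  then show ?thesis
    by (simp only: set_subseqs_upt_length)
qed

lemma elem_sym_Rmin_0: "elem_sym Rmin n 0 x = 0"
proof -
  have "{A. A \<subseteq> {..<n} \<and> card A = 0} = {{}}"
    by (auto dest: finite_subset[of _ "{..<n}"])
  then show ?thesis
    by (simp add: elem_sym_Rmin)
qed

lemma sum_le_sum_of_smallest: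
  fixes f :: "'b \<Rightarrow> 'a::ordered_comm_monoid_add"
  assumes "finite U" "A \<subseteq> U" "B \<subseteq> U" "card A = card B"
    and smallest: "\<And>i j. i \<in> B \<Longrightarrow> j \<in> U - B \<Longrightarrow> f i \<le> f j"
  shows "sum f B \<le> sum f A"
proof -
  have fin: "finite A" "finite B"
    using assms(1-3) finite_subset by blast+
  then have "card (B - A) = card (A - B)"
    using assms(4) by (simp add: card_Diff_subset_Int Int_commute)
  then obtain g where g: "bij_betw g (A - B) (B - A)"
    using fin finite_same_card_bij by (metis finite_Diff)
  have "sum f (B - A) = (\<Sum>j\<in>A - B. f (g j))"
    using sum.reindex_bij_betw[OF g, of f] by simp
  also have "\<dots> \<le> sum f (A - B)"
    using assms(2) g by (intro sum_mono smallest) (auto dest: bij_betwE)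
  finally have "sum f (A \<inter> B) + sum f (B - A) \<le> sum f (A \<inter> B) + sum f (A - B)"
    by (rule add_left_mono)
  then show ?thesis
    using sum.Int_Diff[OF fin(1), of f B] sum.Int_Diff[OF fin(2), of f A] by (simp add: Int_commute)
qed

lemma elem_sym_Rmin_sorted:
  assumes \<pi>: "\<pi> permutes {..<n}" and sorted: "\<And>a b. a \<le> b \<Longrightarrow> b < n \<Longrightarrow> x!(\<pi> a) \<le> x!(\<pi> b)"
    and "m \<le> n"
  shows "elem_sym Rmin n m x = (\<Sum>i\<in>\<pi> ` {..<m}. x!i)"
proof -
  let ?B = "\<pi> ` {..<m}"
  have B: "?B \<subseteq> {..<n}" "card ?B = m"
    using \<open>m \<le> n\<close> permutes_in_image[OF \<pi>] inj_on_subset[OF permutes_inj[OF \<pi>]]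
    by (auto simp: card_image)
  have smallest: "x!i \<le> x!j" if i: "i \<in> ?B" and j: "j \<in> {..<n} - ?B" for i j
  proof -
    obtain a where a: "a < m" "i = \<pi> a"
      using i by auto
    obtain b where b: "b < n" "j = \<pi> b"
      using j permutes_image[OF \<pi>] by (metis Diff_iff imageE lessThan_iff)
    then have "m \<le> b"
      using j by auto
    then show ?thesis
      using a b sorted by simp
  qed
  show ?thesis
    unfolding elem_sym_Rmin
    using B sum_le_sum_of_smallest[OF finite_lessThan _ B(1) _ smallest]
    by (intro antisym INF_lower INF_greatest) auto
qed

lemma mono_eval_Rmin_layers:
  assumes "length d = n" "length x = n" "\<And>i. i < n \<Longrightarrow> d!i \<le> D"
  shows "mono_eval Rmin d x = (\<Sum>t<D. \<Sum>i\<in>{i. i < n \<and> t < d!i}. x!i)"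
proof -
  have "(\<Sum>t<d!i. x!i) = (\<Sum>t<D. if t < d!i then x!i else 0)" if "i < n" for i
  proof -
    have "{t \<in> {..<D}. t < d!i} = {..<d!i}"
      using assms(3)[OF that] by auto
    then show ?thesis
      using sum.inter_filter[of "{..<D}" "\<lambda>_. x!i" "\<lambda>t. t < d!i"] by simp
  qed
  then have "mono_eval Rmin d x = (\<Sum>i<n. \<Sum>t<D. if t < d!i then x!i else 0)"
    using assms(1,2) by (simp add: mono_eval_Rmin)
  also have "\<dots> = (\<Sum>t<D. \<Sum>i<n. if t < d!i then x!i else 0)"
    by (rule sum.swap)
  also have "\<dots> = (\<Sum>t<D. \<Sum>i\<in>{i. i < n \<and> t < d!i}. x!i)"
    using sum.inter_filter[of "{..<n}" "\<lambda>i. x!i"] by (simp add: lessThan_def)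
  finally show ?thesis .
qed

text \<open>For d sorted decreasingly, conj_part n d is the conjugate partition of d, and
  esym_conj n d x is the value at x of the product of the e_(conj_part n d t).\<close>

definition conj_part :: "nat \<Rightarrow> nat list \<Rightarrow> nat \<Rightarrow> nat" where
  "conj_part n d t = card {i. i < n \<and> t < d!i}"

definition esym_conj :: "nat \<Rightarrow> nat list \<Rightarrow> ereal list \<Rightarrow> ereal" where
  "esym_conj n d x = (\<Sum>t<sum_list d. elem_sym Rmin n (conj_part n d t) x)"

lemma conj_part_le: "conj_part n d t \<le> n"
  unfolding conj_part_def by (rule card_mono[of "{..<n}", simplified]) auto

lemma esym_conj_le_mono_eval:
  assumes "length d = n" "length x = n"
  shows "esym_conj n d x \<le> mono_eval Rmin d x"
proof -
  have "mono_eval Rmin d x = (\<Sum>t<sum_list d. \<Sum>i\<in>{i. i < n \<and> t < d!i}. x!i)"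
    using assms elem_le_sum_list by (intro mono_eval_Rmin_layers) auto
  moreover have "elem_sym Rmin n (conj_part n d t) x \<le> (\<Sum>i\<in>{i. i < n \<and> t < d!i}. x!i)" for t
    unfolding elem_sym_Rmin conj_part_def by (rule INF_lower) auto
  ultimately show ?thesis
    unfolding esym_conj_def by (simp add: sum_mono)
qed

lemma permutes_image_Collect:
  assumes "\<pi> permutes {..<n}"
  shows "\<pi> ` {a. a < n \<and> P (\<pi> a)} = {i. i < n \<and> P i}"
  using permutes_in_image[OF assms] permutes_image[OF assms] by auto

lemma down_closed_eq_lessThan:
  fixes T :: "nat set"
  assumes "finite T" "\<And>a b. b \<in> T \<Longrightarrow> a \<le> b \<Longrightarrow> a \<in> T"
  shows "T = {..<card T}"
proof (cases "T = {}")
  case False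
  then have "T = {..Max T}"
    using assms Max_ge Max_in by blast
  then show ?thesis
    by (metis card_atMost lessThan_Suc_atMost)
qed simp

lemma perm_exp_nth: "i < n \<Longrightarrow> perm_exp n \<sigma> d ! i = d ! \<sigma> i"
  by (simp add: perm_exp_def)

lemma sorting_permutation:
  fixes xs :: "'a::linorder list"
  obtains \<pi> where "\<pi> permutes {..<length xs}"
    "\<And>a b. a \<le> b \<Longrightarrow> b < length xs \<Longrightarrow> xs!(\<pi> a) \<le> xs!(\<pi> b)"
proof -
  obtain \<pi> where \<pi>: "\<pi> permutes {..<length xs}" "permute_list \<pi> xs = sort xs"
    using mset_eq_permutation[of "sort xs" xs] by auto
  then have "xs!(\<pi> a) \<le> xs!(\<pi> b)" if "a \<le> b" "b < length xs" for a b
    using that sorted_nth_mono[OF sorted_sort, of a b xs]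
    by (metis le_less_trans length_sort permute_list_nth)
  with \<pi> that show ?thesis
    by blast
qed

lemma antisorting_permutation:
  fixes xs :: "'a::linorder list"
  obtains \<pi> where "\<pi> permutes {..<length xs}"
    "\<And>a b. a \<le> b \<Longrightarrow> b < length xs \<Longrightarrow> xs!(\<pi> b) \<le> xs!(\<pi> a)"
proof -
  obtain \<pi> where \<pi>: "\<pi> permutes {..<length xs}" "permute_list \<pi> xs = rev (sort xs)"
    using mset_eq_permutation[of "rev (sort xs)" xs] by auto
  then have "xs!(\<pi> b) \<le> xs!(\<pi> a)" if "a \<le> b" "b < length xs" for a b
    using that sorted_rev_nth_mono[of "rev (sort xs)" a b]
    by (metis le_less_trans length_rev length_sort permute_list_nth rev_rev_ident sorted_sort)
  with \<pi> that show ?thesis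
    by blast
qed

lemma mono_eval_perm_exp_eq_esym_conj:
  assumes "length d = n" "length x = n"
  obtains \<sigma> where "\<sigma> permutes {..<n}" "mono_eval Rmin (perm_exp n \<sigma> d) x = esym_conj n d x"
proof -
  obtain \<pi> where \<pi>: "\<pi> permutes {..<n}"
    and x_sorted: "\<And>a b. a \<le> b \<Longrightarrow> b < n \<Longrightarrow> x!(\<pi> a) \<le> x!(\<pi> b)"
    using sorting_permutation[of x] assms by metis
  obtain \<rho> where \<rho>: "\<rho> permutes {..<n}"
    and d_antisorted: "\<And>a b. a \<le> b \<Longrightarrow> b < n \<Longrightarrow> d!(\<rho> b) \<le> d!(\<rho> a)"
    using antisorting_permutation[of d] assms by metis
  \<comment> \<open>pair the largest exponents with the smallest entries of x\<close>
  define \<sigma> where "\<sigma> = \<rho> \<circ> inv \<pi>"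
  have \<sigma>: "\<sigma> permutes {..<n}"
    unfolding \<sigma>_def using \<pi> \<rho> by (intro permutes_compose permutes_inv)
  have levels: "{i. i < n \<and> t < perm_exp n \<sigma> d ! i} = \<pi> ` {..<conj_part n d t}" for t
  proof -
    let ?T = "{a. a < n \<and> t < d!(\<rho> a)}"
    have "{i. i < n \<and> t < perm_exp n \<sigma> d ! i} = \<pi> ` ?T"
      using permutes_image_Collect[OF \<pi>, of "\<lambda>i. t < d!(\<sigma> i)"] permutes_inverses(2)[OF \<pi>]
      by (simp add: perm_exp_nth \<sigma>_def cong: conj_cong)
    moreover have "card ?T = conj_part n d t"
      using permutes_image_Collect[OF \<rho>, of "\<lambda>i. t < d!i"] inj_on_subset[OF permutes_inj[OF \<rho>]]
      by (metis (no_types, lifting) card_image conj_part_def subset_UNIV)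
    moreover have "?T = {..<card ?T}"
      using d_antisorted by (intro down_closed_eq_lessThan) (auto intro: less_le_trans)
    ultimately show ?thesis
      by simp
  qed
  have "mono_eval Rmin (perm_exp n \<sigma> d) x =
      (\<Sum>t<sum_list d. \<Sum>i\<in>{i. i < n \<and> t < perm_exp n \<sigma> d ! i}. x!i)"
    using assms permutes_in_image[OF \<sigma>] elem_le_sum_list[of _ d]
    by (intro mono_eval_Rmin_layers) (auto simp: perm_exp_def)
  also have "\<dots> = (\<Sum>t<sum_list d. \<Sum>i\<in>\<pi> ` {..<conj_part n d t}. x!i)"
    by (simp only: levels)
  also have "\<dots> = esym_conj n d x"
    unfolding esym_conj_def using \<pi> x_sorted conj_part_le by (simp add: elem_sym_Rmin_sorted)
  finally show ?thesis
    using \<sigma> that by blast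
qed

definition conj_exps :: "nat \<Rightarrow> nat list \<Rightarrow> nat list" where
  "conj_exps n d = map (\<lambda>j. card {t. t < sum_list d \<and> conj_part n d t = Suc j}) [0..<n]"

lemma sum_lessThan_card_const:
  assumes "finite T"
  shows "(\<Sum>s<card T. c) = (\<Sum>t\<in>T. c)"
proof -
  obtain g where "bij_betw g {..<card T} T"
    using ex_bij_betw_nat_finite[OF assms] by (auto simp: lessThan_atLeast0)
  then show ?thesis
    using sum.reindex_bij_betw[of g _ _ "\<lambda>_. c"] by simp
qed

lemma mono_eval_conj_exps:
  "length x = n \<Longrightarrow>
    mono_eval Rmin (conj_exps n d) (map (\<lambda>j. elem_sym Rmin n (Suc j) x) [0..<n]) = esym_conj n d x"
proof -
  let ?e = "\<lambda>k. elem_sym Rmin n k x"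
  let ?T = "\<lambda>k. {t. t < sum_list d \<and> conj_part n d t = k}"
  have "mono_eval Rmin (conj_exps n d) (map (\<lambda>j. ?e (Suc j)) [0..<n]) =
      (\<Sum>j<n. \<Sum>t\<in>?T (Suc j). ?e (conj_part n d t))"
    by (simp add: mono_eval_Rmin conj_exps_def sum_lessThan_card_const)
  also have "\<dots> = (\<Sum>k<Suc n. \<Sum>t\<in>?T k. ?e (conj_part n d t))"
    by (simp only: sum.lessThan_Suc_shift) (simp add: elem_sym_Rmin_0)
  also have "\<dots> = esym_conj n d x"
    unfolding esym_conj_def using conj_part_le
    by (subst sum.group[symmetric, where g = "conj_part n d" and T = "{..<Suc n}"])
      (auto simp: less_Suc_eq_le)
  finally show ?thesis .
qed

lemma sym_fpoly_perm_exp_mem: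
  assumes "sym_fpoly R n p" "\<sigma> permutes {..<n}" "(c, d) \<in> set p"
  shows "(c, perm_exp n \<sigma> d) \<in> set p"
proof -
  have "set (map (\<lambda>(c, d). (c, perm_exp n \<sigma> d)) p) = set p"
    using assms(1,2) unfolding sym_fpoly_def by (metis set_mset_mset)
  then show ?thesis
    using assms(3) by force
qed

lemma poly_eval_Rmin_sym_fpoly:
  assumes sym: "sym_fpoly Rmin n p" and x: "length x = n"
  shows "poly_eval Rmin p x = (INF (c, d)\<in>set p. c + esym_conj n d x)"
  unfolding poly_eval_Rmin
proof (rule antisym; intro INF_greatest; clarify)
  fix c d assume cd: "(c, d) \<in> set p"
  then have "length d = n"
    using sym by (auto simp: sym_fpoly_def is_fpoly_def)
  then obtain \<sigma> where "\<sigma> permutes {..<n}" "mono_eval Rmin (perm_exp n \<sigma> d) x = esym_conj n d x"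
    using mono_eval_perm_exp_eq_esym_conj x by blast
  then show "(INF (c, d)\<in>set p. c + mono_eval Rmin d x) \<le> c + esym_conj n d x"
    using sym_fpoly_perm_exp_mem[OF sym _ cd] by (metis (no_types, lifting) INF_lower case_prod_conv)
next
  fix c d assume cd: "(c, d) \<in> set p"
  then have "length d = n"
    using sym by (auto simp: sym_fpoly_def is_fpoly_def)
  then have "c + esym_conj n d x \<le> c + mono_eval Rmin d x"
    using esym_conj_le_mono_eval x by (simp add: add_left_mono)
  then show "(INF (c, d)\<in>set p. c + esym_conj n d x) \<le> c + mono_eval Rmin d x"
    by (intro INF_lower2[OF cd]) simp
qed

theorem fully_elementary_Rmin: "fully_elementary Rmin"
  unfolding fully_elementary_def
proof (intro allI impI)
  fix n p assume sym: "sym_fpoly Rmin n p"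
  define r where "r = map (\<lambda>(c, d). (c, conj_exps n d)) p"
  have "is_fpoly Rmin n r"
    using sym by (auto simp: sym_fpoly_def is_fpoly_def r_def conj_exps_def)
  moreover have "poly_eval Rmin p x = poly_eval Rmin r (map (\<lambda>j. elem_sym Rmin n (Suc j) x) [0..<n])"
    if "length x = n" for x
    unfolding poly_eval_Rmin_sym_fpoly[OF sym that] poly_eval_Rmin[of r]
    using that by (simp add: r_def mono_eval_conj_exps image_image case_prod_unfold)
  ultimately show "\<exists>r. is_fpoly Rmin n r \<and> (\<forall>x. length x = n \<and> set x \<subseteq> car Rmin \<longrightarrow>
      poly_eval Rmin p x = poly_eval Rmin r (map (\<lambda>j. elem_sym Rmin n (Suc j) x) [0..<n]))"
    by blast
qed

lemma Rmax_simps [simp]: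
  "car Rmax = {x. x \<noteq> \<infinity>}" "sadd Rmax = max" "smul Rmax = (+)" "szero Rmax = -\<infinity>" "sone Rmax = 0"
  by (simp_all add: Rmax_def)

lemma uminus_min_ereal: "- min a b = max (- a) (- b :: ereal)"
  by (auto simp: min_def max_def)

lemma uminus_max_ereal: "- max a b = min (- a) (- b :: ereal)"
  by (auto simp: min_def max_def)

lemma srng_iso_Rmin_Rmax: "srng_iso Rmin Rmax uminus uminus"
proof unfold_locales
  fix a b :: ereal assume "a \<in> car Rmin" "b \<in> car Rmin"
  then show "- (smul Rmin a b) = smul Rmax (- a) (- b)"
    by (cases a; cases b) auto
qed (auto simp: min_def uminus_min_ereal ereal_uminus_eq_reorder)

lemma srng_iso_Rmax_Rmin: "srng_iso Rmax Rmin uminus uminus"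
proof unfold_locales
  fix a b :: ereal assume "a \<in> car Rmax" "b \<in> car Rmax"
  then show "- (smul Rmax a b) = smul Rmin (- a) (- b)"
    by (cases a; cases b) auto
qed (auto simp: max_def uminus_max_ereal ereal_uminus_eq_reorder)

theorem fully_elementary_Rmax: "fully_elementary Rmax"
  by (rule srng_iso.fully_elementary_iso[OF srng_iso_Rmin_Rmax fully_elementary_Rmin])

section \<open>Symmetrizations\<close>

lemma Ssym_sadd: "sadd (Ssym X) a b = (sadd X (fst a) (fst b), sadd X (snd a) (snd b))"
  by (simp add: Ssym_def case_prod_unfold)

lemma Ssym_smul: "smul (Ssym X) a b =
    (sadd X (smul X (fst a) (fst b)) (smul X (snd a) (snd b)),
     sadd X (smul X (fst a) (snd b)) (smul X (snd a) (fst b)))"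
  by (simp add: Ssym_def case_prod_unfold)

lemma Ssym_car: "car (Ssym X) = car X \<times> car X"
  by (simp add: Ssym_def)

lemma Ssym_simps [simp]: "szero (Ssym X) = (szero X, szero X)" "sone (Ssym X) = (sone X, szero X)"
  by (simp_all add: Ssym_def)

lemma closed_srng_Ssym: "closed_srng X \<Longrightarrow> closed_srng (Ssym X)"
  unfolding closed_srng_def by (auto simp: Ssym_car Ssym_sadd Ssym_smul mem_Times_iff)

locale sim_congruence = closed_srng "Ssym X" for X :: "'a srng" +
  assumes sim_equiv: "equiv (car (Ssym X)) (sim_rel X)"
    and sim_sadd: "(a, a') \<in> sim_rel X \<Longrightarrow> (b, b') \<in> sim_rel X \<Longrightarrow>
      (sadd (Ssym X) a b, sadd (Ssym X) a' b') \<in> sim_rel X"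
    and sim_smul: "(a, a') \<in> sim_rel X \<Longrightarrow> (b, b') \<in> sim_rel X \<Longrightarrow>
      (smul (Ssym X) a b, smul (Ssym X) a' b') \<in> sim_rel X"
begin

lemma sim_rel_some:
  assumes "a \<in> car (Ssym X)"
  shows "(a, SOME a'. a' \<in> sim_rel X `` {a}) \<in> sim_rel X"
proof -
  have "a \<in> sim_rel X `` {a}"
    using equiv_class_self[OF sim_equiv assms] .
  then show ?thesis
    using someI[of "\<lambda>a'. a' \<in> sim_rel X `` {a}"] by blast
qed

lemma class_eq_iff: "(sim_rel X `` {a} = sim_rel X `` {b}) \<longleftrightarrow> (a, b) \<in> sim_rel X"
  if "a \<in> car (Ssym X)" "b \<in> car (Ssym X)"
  using eq_equiv_class_iff[OF sim_equiv that] .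

lemma Symz_sadd_class:
  assumes "a \<in> car (Ssym X)" "b \<in> car (Ssym X)"
  shows "sadd (Symz X) (sim_rel X `` {a}) (sim_rel X `` {b}) = sim_rel X `` {sadd (Ssym X) a b}"
  unfolding Symz_def using sim_sadd[OF sim_rel_some[OF assms(1)] sim_rel_some[OF assms(2)]]
  by (simp add: equiv_class_eq[OF sim_equiv])

lemma Symz_smul_class:
  assumes "a \<in> car (Ssym X)" "b \<in> car (Ssym X)"
  shows "smul (Symz X) (sim_rel X `` {a}) (sim_rel X `` {b}) = sim_rel X `` {smul (Ssym X) a b}"
  unfolding Symz_def using sim_smul[OF sim_rel_some[OF assms(1)] sim_rel_some[OF assms(2)]]
  by (simp add: equiv_class_eq[OF sim_equiv])

lemma class_in_Symz: "a \<in> car (Ssym X) \<Longrightarrow> sim_rel X `` {a} \<in> car (Symz X)"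
  by (simp add: Symz_def quotientI)

lemma Symz_carE:
  assumes "A \<in> car (Symz X)"
  obtains a where "a \<in> car (Ssym X)" "A = sim_rel X `` {a}"
  using assms by (auto simp: Symz_def elim!: quotientE)

lemma class_morphism: "srng_morphism (Ssym X) (Symz X) (\<lambda>a. sim_rel X `` {a})"
  by unfold_locales
    (simp_all add: class_in_Symz Symz_sadd_class Symz_smul_class szero_closed sone_closed,
     simp_all add: Symz_def)

lemma closed_srng_Symz: "closed_srng (Symz X)"
proof unfold_locales
  fix A B assume "A \<in> car (Symz X)" "B \<in> car (Symz X)"
  then obtain a b where "a \<in> car (Ssym X)" "b \<in> car (Ssym X)"
    "A = sim_rel X `` {a}" "B = sim_rel X `` {b}"
    by (metis Symz_carE)
  then show "sadd (Symz X) A B \<in> car (Symz X)" "smul (Symz X) A B \<in> car (Symz X)"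
    by (simp_all add: Symz_sadd_class Symz_smul_class class_in_Symz sadd_closed smul_closed)
qed (use szero_closed sone_closed class_in_Symz in \<open>simp_all add: Symz_def\<close>)

lemma is_fpoly_class_lift:
  assumes "is_fpoly (Symz X) n r'"
  obtains r where "is_fpoly (Ssym X) n r" "map_coeffs (\<lambda>a. sim_rel X `` {a}) r = r'"
proof -
  define rep where "rep A = (SOME a. a \<in> car (Ssym X) \<and> A = sim_rel X `` {a})" for A
  have rep: "rep A \<in> car (Ssym X)" "sim_rel X `` {rep A} = A" if "A \<in> car (Symz X)" for A
  proof -
    have "\<exists>a. a \<in> car (Ssym X) \<and> A = sim_rel X `` {a}"
      using that by (metis Symz_carE)
    from someI_ex[OF this] show "rep A \<in> car (Ssym X)" "sim_rel X `` {rep A} = A"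
      unfolding rep_def by simp_all
  qed
  have "is_fpoly (Ssym X) n (map_coeffs rep r')"
    using assms rep(1) by (fastforce simp: is_fpoly_def map_coeffs_def)
  moreover have "map_coeffs (\<lambda>a. sim_rel X `` {a}) (map_coeffs rep r') = r'"
    using assms rep(2) unfolding map_coeffs_map_coeffs
    by (intro map_coeffs_id_on) (fastforce simp: is_fpoly_def)
  ultimately show ?thesis
    using that by blast
qed

lemma fully_elementary_Symz_lift:
  assumes fe: "fully_elementary (Symz X)" and sym: "sym_fpoly (Ssym X) n p"
  obtains r where "is_fpoly (Ssym X) n r"
    "\<And>P. length P = n \<Longrightarrow> set P \<subseteq> car (Ssym X) \<Longrightarrow>
      (poly_eval (Ssym X) p P, poly_eval (Ssym X) r (map (\<lambda>j. elem_sym (Ssym X) n (Suc j) P) [0..<n]))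
        \<in> sim_rel X"
proof -
  interpret cls: srng_morphism "Ssym X" "Symz X" "\<lambda>a. sim_rel X `` {a}"
    by (rule class_morphism)
  let ?cls = "\<lambda>a. sim_rel X `` {a}"
  let ?e = "\<lambda>S P. map (\<lambda>j. elem_sym S n (Suc j) P) [0..<n]"
  have p_coeffs: "fst ` set p \<subseteq> car (Ssym X)"
    using sym is_fpoly_coeffs unfolding sym_fpoly_def by blast
  have "sym_fpoly (Symz X) n (map_coeffs ?cls p)"
    using sym class_in_Symz by (rule sym_fpoly_map_coeffs)
  then obtain r' where r': "is_fpoly (Symz X) n r'"
    and p_r': "\<And>x. length x = n \<Longrightarrow> set x \<subseteq> car (Symz X) \<Longrightarrow>
      poly_eval (Symz X) (map_coeffs ?cls p) x = poly_eval (Symz X) r' (?e (Symz X) x)"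
    using fe unfolding fully_elementary_def by blast
  obtain r where r: "is_fpoly (Ssym X) n r" and r_r': "map_coeffs ?cls r = r'"
    using is_fpoly_class_lift[OF r'] .
  have "(poly_eval (Ssym X) p P, poly_eval (Ssym X) r (?e (Ssym X) P)) \<in> sim_rel X"
    if P: "length P = n" "set P \<subseteq> car (Ssym X)" for P
  proof -
    have "?cls (poly_eval (Ssym X) p P) = poly_eval (Symz X) (map_coeffs ?cls p) (map ?cls P)"
      by (rule cls.hom_poly_eval[OF P(2) p_coeffs])
    also have "\<dots> = poly_eval (Symz X) r' (?e (Symz X) (map ?cls P))"
      using P class_in_Symz by (subst p_r') auto
    also have "\<dots> = ?cls (poly_eval (Ssym X) r (?e (Ssym X) P))"
      using cls.hom_poly_eval_elem_sym[OF P is_fpoly_coeffs[OF r]] r_r' by simp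
    moreover have "set (?e (Ssym X) P) \<subseteq> car (Ssym X)"
      using elem_sym_closed[OF P] by auto
    ultimately show ?thesis
      using class_eq_iff poly_eval_closed[OF P(2) p_coeffs] poly_eval_closed is_fpoly_coeffs[OF r]
      by blast
  qed
  with r that show ?thesis
    by blast
qed

end

lemma sim_rel_carD: "(a, b) \<in> sim_rel X \<Longrightarrow> a \<in> car (Ssym X) \<and> b \<in> car (Ssym X)"
  by (simp add: sim_rel_def Ssym_car)

context srng_iso
begin

lemma Ssym_iso: "srng_iso (Ssym R) (Ssym R') (map_prod h h) (map_prod g g)"
proof -
  interpret S: closed_srng "Ssym R"
    using closed_srng_Ssym closed_srng_axioms .
  show ?thesis
    by unfold_locales
      (auto simp: Ssym_car Ssym_sadd Ssym_smul hom_closed hom_sadd hom_smul hom_szero hom_sone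
        smul_closed inv_closed hom_inv inv_hom)
qed

lemma sim_rel_hom_iff:
  assumes "a \<in> car (Ssym R)" "b \<in> car (Ssym R)"
  shows "(map_prod h h a, map_prod h h b) \<in> sim_rel R' \<longleftrightarrow> (a, b) \<in> sim_rel R"
  using assms hom_closed
  by (cases a; cases b)
    (auto simp: sim_rel_def Ssym_car hom_eq_iff hom_sadd[symmetric] sadd_closed)

lemma sim_rel_iff_hom:
  "(a, b) \<in> sim_rel R \<longleftrightarrow>
    a \<in> car (Ssym R) \<and> b \<in> car (Ssym R) \<and> (map_prod h h a, map_prod h h b) \<in> sim_rel R'"
  using sim_rel_hom_iff sim_rel_carD by blast

lemma sim_equiv_pullback:
  assumes "equiv (car (Ssym R')) (sim_rel R')"
  shows "equiv (car (Ssym R)) (sim_rel R)"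
proof (rule equivI)
  have sym': "sym (sim_rel R')" and trans': "trans (sim_rel R')"
    using assms by (simp_all add: equiv_def)
  show "sim_rel R \<subseteq> car (Ssym R) \<times> car (Ssym R)"
    by (auto dest: sim_rel_carD)
  show "refl_on (car (Ssym R)) (sim_rel R)"
    by (rule refl_onI) (simp add: sim_rel_def Ssym_car)
  show "sym (sim_rel R)"
    using symD[OF sym'] by (auto simp: sim_rel_iff_hom intro!: symI)
  show "trans (sim_rel R)"
    using transD[OF trans'] by (auto simp: sim_rel_iff_hom intro!: transI)
qed

lemma sim_congruence_pullback:
  assumes "sim_congruence R'"
  shows "sim_congruence R"
proof -
  interpret S': sim_congruence R'
    by (fact assms)
  interpret S: srng_iso "Ssym R" "Ssym R'" "map_prod h h" "map_prod g g"
    by (rule Ssym_iso)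
  let ?H = "map_prod h h"
  show ?thesis
  proof unfold_locales
    show "equiv (car (Ssym R)) (sim_rel R)"
      by (rule sim_equiv_pullback[OF S'.sim_equiv])
  next
    fix a a' b b' assume "(a, a') \<in> sim_rel R" "(b, b') \<in> sim_rel R"
    then have car: "a \<in> car (Ssym R)" "a' \<in> car (Ssym R)" "b \<in> car (Ssym R)" "b' \<in> car (Ssym R)"
      and "(?H a, ?H a') \<in> sim_rel R'" "(?H b, ?H b') \<in> sim_rel R'"
      by (simp_all add: sim_rel_iff_hom)
    then have "(sadd (Ssym R') (?H a) (?H b), sadd (Ssym R') (?H a') (?H b')) \<in> sim_rel R'"
      "(smul (Ssym R') (?H a) (?H b), smul (Ssym R') (?H a') (?H b')) \<in> sim_rel R'"
      by (simp_all add: S'.sim_sadd S'.sim_smul)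
    then show "(sadd (Ssym R) a b, sadd (Ssym R) a' b') \<in> sim_rel R"
      "(smul (Ssym R) a b, smul (Ssym R) a' b') \<in> sim_rel R"
      using car by (simp_all add: sim_rel_iff_hom S.sadd_closed S.smul_closed S.hom_sadd S.hom_smul)
  qed
qed

lemma image_sim_class:
  assumes "a \<in> car (Ssym R)"
  shows "map_prod h h ` (sim_rel R `` {a}) = sim_rel R' `` {map_prod h h a}"
proof -
  interpret S: srng_iso "Ssym R" "Ssym R'" "map_prod h h" "map_prod g g"
    by (rule Ssym_iso)
  show ?thesis
  proof (intro equalityI subsetI)
    fix c' assume "c' \<in> map_prod h h ` (sim_rel R `` {a})"
    then obtain c where "(a, c) \<in> sim_rel R" "c' = map_prod h h c"
      by auto
    then show "c' \<in> sim_rel R' `` {map_prod h h a}"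
      using sim_rel_hom_iff[OF assms, of c] sim_rel_carD[of a c R] by simp
  next
    fix c' assume "c' \<in> sim_rel R' `` {map_prod h h a}"
    then have sim': "(map_prod h h a, c') \<in> sim_rel R'"
      by simp
    then have c': "c' \<in> car (Ssym R')"
      by (simp add: sim_rel_carD)
    then have "(a, map_prod g g c') \<in> sim_rel R"
      using sim' sim_rel_hom_iff[OF assms S.inv_closed[OF c']] S.hom_inv[OF c'] by simp
    then show "c' \<in> map_prod h h ` (sim_rel R `` {a})"
      using S.hom_inv[OF c'] by (metis Image_singleton_iff image_eqI)
  qed
qed

lemma Symz_morphism:
  assumes "sim_congruence R'"
  shows "srng_morphism (Symz R) (Symz R') (image (map_prod h h))"
proof -
  interpret S': sim_congruence R'
    by (fact assms)
  interpret S: sim_congruence R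
    by (rule sim_congruence_pullback[OF assms])
  interpret SS: srng_iso "Ssym R" "Ssym R'" "map_prod h h" "map_prod g g"
    by (rule Ssym_iso)
  show ?thesis
  proof (intro srng_morphism.intro S.closed_srng_Symz srng_morphism_axioms.intro)
    fix A B assume "A \<in> car (Symz R)" "B \<in> car (Symz R)"
    then obtain a b where ab: "a \<in> car (Ssym R)" "b \<in> car (Ssym R)"
      "A = sim_rel R `` {a}" "B = sim_rel R `` {b}"
      by (metis S.Symz_carE)
    show "map_prod h h ` A \<in> car (Symz R')"
      using ab by (simp add: image_sim_class S'.class_in_Symz SS.hom_closed)
    show "map_prod h h ` sadd (Symz R) A B = sadd (Symz R') (map_prod h h ` A) (map_prod h h ` B)"
      using ab by (simp add: image_sim_class S.Symz_sadd_class S'.Symz_sadd_class SS.hom_closed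
          SS.hom_sadd S.sadd_closed)
    show "map_prod h h ` smul (Symz R) A B = smul (Symz R') (map_prod h h ` A) (map_prod h h ` B)"
      using ab by (simp add: image_sim_class S.Symz_smul_class S'.Symz_smul_class SS.hom_closed
          SS.hom_smul S.smul_closed)
  next
    show "map_prod h h ` szero (Symz R) = szero (Symz R')"
      "map_prod h h ` sone (Symz R) = sone (Symz R')"
      using image_sim_class S.szero_closed S.sone_closed SS.hom_szero SS.hom_sone
      by (simp_all add: Symz_def)
  qed
qed

lemma fully_elementary_Symz_iso:
  assumes cong': "sim_congruence R'" and fe: "fully_elementary (Symz R)"
  shows "fully_elementary (Symz R')"
proof (rule srng_morphism.fully_elementary_transfer[OF Symz_morphism[OF cong'] fe])
  interpret S': sim_congruence R'
    by (fact cong')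
  interpret S: sim_congruence R
    by (rule sim_congruence_pullback[OF cong'])
  interpret SS: srng_iso "Ssym R" "Ssym R'" "map_prod h h" "map_prod g g"
    by (rule Ssym_iso)
  let ?H = "map_prod h h" and ?G = "map_prod g g"
  fix B assume "B \<in> car (Symz R')"
  then obtain b where b: "b \<in> car (Ssym R')" "B = sim_rel R' `` {b}"
    by (metis S'.Symz_carE)
  have "?G ` B = ?G ` ?H ` (sim_rel R `` {?G b})"
    using b image_sim_class SS.inv_closed SS.hom_inv by simp
  also have "\<dots> = sim_rel R `` {?G b}"
    using sim_rel_carD[of "?G b" _ R] SS.inv_hom by (force simp: image_image)
  finally show "?G ` B \<in> car (Symz R)"
    using b SS.inv_closed S.class_in_Symz by simp
  show "?H ` ?G ` B = B"
    using b sim_rel_carD SS.hom_inv by (force simp: image_image)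
qed

end

definition tabs :: "ereal \<times> ereal \<Rightarrow> ereal" where
  "tabs a = min (fst a) (snd a)"

text \<open>The sign is 1, -1 or 0 for positive, negative and balanced elements of S(R_min).\<close>

definition sign_val :: "ereal \<times> ereal \<Rightarrow> ereal \<times> int" where
  "sign_val a = (tabs a, if fst a < snd a then 1 else if snd a < fst a then -1 else 0)"

definition sign_val_add :: "ereal \<times> int \<Rightarrow> ereal \<times> int \<Rightarrow> ereal \<times> int" where
  "sign_val_add u v =
    (if fst u < fst v then u else if fst v < fst u then v
     else (fst u, if snd u = snd v then snd u else 0))"

definition sign_val_mul :: "ereal \<times> int \<Rightarrow> ereal \<times> int \<Rightarrow> ereal \<times> int" where
  "sign_val_mul u v = (fst u + fst v, snd u * snd v)"

lemma sim_rel_Rmin_iff: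
  "(a, b) \<in> sim_rel Rmin \<longleftrightarrow> a \<in> car (Ssym Rmin) \<and> b \<in> car (Ssym Rmin) \<and> sign_val a = sign_val b"
  by (cases a; cases b; rename_tac a1 a2 b1 b2; case_tac a1; case_tac a2; case_tac b1; case_tac b2)
    (auto simp: sim_rel_def Ssym_car sign_val_def tabs_def min_def)

lemma sign_val_sadd:
  "a \<in> car (Ssym Rmin) \<Longrightarrow> b \<in> car (Ssym Rmin) \<Longrightarrow>
    sign_val (sadd (Ssym Rmin) a b) = sign_val_add (sign_val a) (sign_val b)"
  by (cases a; cases b; rename_tac a1 a2 b1 b2; case_tac a1; case_tac a2; case_tac b1; case_tac b2)
    (auto simp: Ssym_car Ssym_sadd sign_val_def sign_val_add_def tabs_def min_def)

lemma sign_val_smul: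
  "a \<in> car (Ssym Rmin) \<Longrightarrow> b \<in> car (Ssym Rmin) \<Longrightarrow>
    sign_val (smul (Ssym Rmin) a b) = sign_val_mul (sign_val a) (sign_val b)"
  by (cases a; cases b; rename_tac a1 a2 b1 b2; case_tac a1; case_tac a2; case_tac b1; case_tac b2)
    (auto simp: Ssym_car Ssym_smul sign_val_def sign_val_mul_def tabs_def min_def)

lemma sim_congruence_Rmin: "sim_congruence Rmin"
proof -
  interpret closed_srng "Ssym Rmin"
    by (rule closed_srng_Ssym[OF closed_srng_Rmin])
  show ?thesis
  proof unfold_locales
    show "equiv (car (Ssym Rmin)) (sim_rel Rmin)"
      by (rule equivI) (auto simp: sim_rel_Rmin_iff refl_on_def intro!: symI transI)
  qed (auto simp: sim_rel_Rmin_iff sign_val_sadd sign_val_smul sadd_closed smul_closed)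
qed

lemma tabs_morphism: "srng_morphism (Ssym Rmin) Rmin tabs"
proof (intro srng_morphism.intro closed_srng_Ssym closed_srng_Rmin srng_morphism_axioms.intro)
  fix a b assume "a \<in> car (Ssym Rmin)" "b \<in> car (Ssym Rmin)"
  then show "tabs (smul (Ssym Rmin) a b) = smul Rmin (tabs a) (tabs b)"
    by (cases a; cases b; rename_tac a1 a2 b1 b2; case_tac a1; case_tac a2; case_tac b1; case_tac b2)
      (auto simp: Ssym_car Ssym_smul tabs_def min_def)
qed (auto simp: Ssym_car Ssym_sadd tabs_def min_def)

lemma foldr_sadd_Ssym_Rmin:
  "foldr (sadd (Ssym Rmin)) l (szero (Ssym Rmin)) = (Inf (fst ` set l), Inf (snd ` set l))"
  by (induction l) (simp_all add: Ssym_sadd inf_min top_ereal_def)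

lemma positive_foldr_sadd_Ssym_Rmin:
  assumes "((ereal z, \<infinity>), foldr (sadd (Ssym Rmin)) l (szero (Ssym Rmin))) \<in> sim_rel Rmin"
  shows "\<forall>u\<in>set l. ereal z \<le> fst u \<and> ereal z < snd u" "\<exists>u\<in>set l. fst u = ereal z"
proof -
  have Inf: "Inf (fst ` set l) = ereal z" "ereal z < Inf (snd ` set l)"
    using assms unfolding foldr_sadd_Ssym_Rmin
    by (auto simp: sim_rel_Rmin_iff sign_val_def tabs_def min_def split: if_splits)
  then show "\<forall>u\<in>set l. ereal z \<le> fst u \<and> ereal z < snd u"
    by (metis INF_lower less_le_trans)
  have "fst ` set l \<noteq> {}"
    using Inf(1) by (auto simp: top_ereal_def)
  then have "Inf (fst ` set l) \<in> fst ` set l"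
    by (intro finite_Inf_in) (auto simp: inf_min min_def)
  then show "\<exists>u\<in>set l. fst u = ereal z"
    using Inf(1) by force
qed

lemma positive_poly_eval_Ssym_Rmin:
  assumes "((ereal z, \<infinity>), poly_eval (Ssym Rmin) r es) \<in> sim_rel Rmin"
  shows "\<forall>(c, d)\<in>set r. ereal z \<le> fst (smul (Ssym Rmin) c (mono_eval (Ssym Rmin) d es)) \<and>
      ereal z < snd (smul (Ssym Rmin) c (mono_eval (Ssym Rmin) d es))"
    and "\<exists>(c, d)\<in>set r. fst (smul (Ssym Rmin) c (mono_eval (Ssym Rmin) d es)) = ereal z"
  using positive_foldr_sadd_Ssym_Rmin[of z "map (\<lambda>(c, d). smul (Ssym Rmin) c (mono_eval (Ssym Rmin) d es)) r"]
    assms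
  by (simp_all add: poly_eval_def case_prod_unfold)

lemma tabs_smul_mono_eval:
  assumes "c \<in> car (Ssym Rmin)" "set es \<subseteq> car (Ssym Rmin)"
  shows "tabs (smul (Ssym Rmin) c (mono_eval (Ssym Rmin) d es)) = tabs c + mono_eval Rmin d (map tabs es)"
proof -
  interpret srng_morphism "Ssym Rmin" Rmin tabs
    by (rule tabs_morphism)
  show ?thesis
    using assms by (simp add: hom_smul hom_mono_eval mono_eval_closed)
qed

lemma balanced_smul_Ssym_Rmin:
  "fst a = snd a \<or> fst b = snd b \<Longrightarrow> fst (smul (Ssym Rmin) a b) = snd (smul (Ssym Rmin) a b)"
  by (auto simp: Ssym_smul min.commute)

lemma balanced_mono_eval_Ssym_Rmin:
  assumes "fst e = snd e"
  shows "fst (mono_eval (Ssym Rmin) (Suc k # ds) (e # es)) = snd (mono_eval (Ssym Rmin) (Suc k # ds) (e # es))"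
proof -
  have "fst (spow (Ssym Rmin) e (Suc k)) = snd (spow (Ssym Rmin) e (Suc k))"
    unfolding spow_def using assms by (simp add: balanced_smul_Ssym_Rmin)
  then show ?thesis
    unfolding mono_eval_def by (simp add: balanced_smul_Ssym_Rmin)
qed

lemma mono_eval_Rmin_two: "mono_eval Rmin [i, j] [ereal a, ereal b] = ereal (real i * a + real j * b)"
  by (simp add: mono_eval_Rmin numeral_2_eq_2)

definition sum_of_squares :: "(ereal \<times> ereal) fpoly" where
  "sum_of_squares = [((0, \<infinity>), [2, 0]), ((0, \<infinity>), [0, 2])]"

lemma sym_fpoly_sum_of_squares: "sym_fpoly (Ssym Rmin) 2 sum_of_squares"
  unfolding sym_fpoly_def
proof (intro conjI allI impI)
  show "is_fpoly (Ssym Rmin) 2 sum_of_squares"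
    by (simp add: sum_of_squares_def is_fpoly_def Ssym_car)
next
  fix \<sigma> :: "nat \<Rightarrow> nat" assume \<sigma>: "\<sigma> permutes {..<2}"
  then have "\<sigma> 0 < 2" "\<sigma> 1 < 2" "\<sigma> 0 \<noteq> \<sigma> 1"
    using permutes_in_image[OF \<sigma>] permutes_inj[OF \<sigma>] by (auto dest: injD)
  then have "(\<sigma> 0 = 0 \<and> \<sigma> 1 = 1) \<or> (\<sigma> 0 = 1 \<and> \<sigma> 1 = 0)"
    by auto
  then show "mset (map (\<lambda>(c, d). (c, perm_exp 2 \<sigma> d)) sum_of_squares) = mset sum_of_squares"
    by (auto simp: sum_of_squares_def perm_exp_def upt_rec add_mset_commute)
qed

lemma sum_of_squares_test_points:
  fixes e :: "(ereal \<times> ereal) list \<Rightarrow> (ereal \<times> ereal) list"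
  defines "e P \<equiv> map (\<lambda>j. elem_sym (Ssym Rmin) 2 (Suc j) P) [0..<2]"
  shows "poly_eval (Ssym Rmin) sum_of_squares [(ereal (-1), \<infinity>), (\<infinity>, ereal (-1))] = (ereal (-2), \<infinity>)"
    "e [(ereal (-1), \<infinity>), (\<infinity>, ereal (-1))] = [(ereal (-1), ereal (-1)), (\<infinity>, ereal (-2))]"
    "poly_eval (Ssym Rmin) sum_of_squares [(ereal 1, \<infinity>), (\<infinity>, ereal 1)] = (ereal 2, \<infinity>)"
    "e [(ereal 1, \<infinity>), (\<infinity>, ereal 1)] = [(ereal 1, ereal 1), (\<infinity>, ereal 2)]"
    "poly_eval (Ssym Rmin) sum_of_squares [(ereal 0, \<infinity>), (ereal 1, \<infinity>)] = (ereal 0, \<infinity>)"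
    "e [(ereal 0, \<infinity>), (ereal 1, \<infinity>)] = [(ereal 0, \<infinity>), (ereal 1, \<infinity>)]"
  by (simp_all add: e_def sum_of_squares_def poly_eval_def mono_eval_def spow_def elem_sym_def
      Ssym_sadd Ssym_smul upt_rec numeral_2_eq_2)

lemma fully_elementary_Symz_Rmin_sum_of_squares:
  assumes "fully_elementary (Symz Rmin)"
  obtains r where "is_fpoly (Ssym Rmin) 2 r"
    "((ereal (-2), \<infinity>), poly_eval (Ssym Rmin) r [(ereal (-1), ereal (-1)), (\<infinity>, ereal (-2))])
      \<in> sim_rel Rmin"
    "((ereal 2, \<infinity>), poly_eval (Ssym Rmin) r [(ereal 1, ereal 1), (\<infinity>, ereal 2)]) \<in> sim_rel Rmin"
    "((ereal 0, \<infinity>), poly_eval (Ssym Rmin) r [(ereal 0, \<infinity>), (ereal 1, \<infinity>)]) \<in> sim_rel Rmin"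
proof -
  obtain r where r: "is_fpoly (Ssym Rmin) 2 r"
    and lift: "\<And>P. length P = 2 \<Longrightarrow> set P \<subseteq> car (Ssym Rmin) \<Longrightarrow>
      (poly_eval (Ssym Rmin) sum_of_squares P,
       poly_eval (Ssym Rmin) r (map (\<lambda>j. elem_sym (Ssym Rmin) 2 (Suc j) P) [0..<2])) \<in> sim_rel Rmin"
    using sim_congruence.fully_elementary_Symz_lift[OF sim_congruence_Rmin assms sym_fpoly_sum_of_squares]
    by blast
  show ?thesis
    using that[OF r] lift[of "[(ereal (-1), \<infinity>), (\<infinity>, ereal (-1))]"]
      lift[of "[(ereal 1, \<infinity>), (\<infinity>, ereal 1)]"] lift[of "[(ereal 0, \<infinity>), (ereal 1, \<infinity>)]"]
    by (simp only: sum_of_squares_test_points) (simp add: Ssym_car)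
qed

theorem not_fully_elementary_Symz_Rmin: "\<not> fully_elementary (Symz Rmin)"
proof
  assume "fully_elementary (Symz Rmin)"
  let ?t = "\<lambda>c d es. smul (Ssym Rmin) c (mono_eval (Ssym Rmin) d es)"
  define es1 es2 es3 :: "(ereal \<times> ereal) list"
    where "es1 = [(ereal (-1), ereal (-1)), (\<infinity>, ereal (-2))]"
      and "es2 = [(ereal 1, ereal 1), (\<infinity>, ereal 2)]"
      and "es3 = [(ereal 0, \<infinity>), (ereal 1, \<infinity>)]"
  obtain r where r: "is_fpoly (Ssym Rmin) 2 r"
    and pos1: "((ereal (-2), \<infinity>), poly_eval (Ssym Rmin) r es1) \<in> sim_rel Rmin"
    and pos2: "((ereal 2, \<infinity>), poly_eval (Ssym Rmin) r es2) \<in> sim_rel Rmin"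
    and pos3: "((ereal 0, \<infinity>), poly_eval (Ssym Rmin) r es3) \<in> sim_rel Rmin"
    using fully_elementary_Symz_Rmin_sum_of_squares \<open>fully_elementary (Symz Rmin)\<close>
    unfolding es1_def es2_def es3_def by metis
  obtain c i j where cij: "(c, [i, j]) \<in> set r" "fst (?t c [i, j] es3) = ereal 0"
    using positive_poly_eval_Ssym_Rmin(2)[OF pos3] r by (auto simp: is_fpoly_def numeral_2_eq_2 length_Suc_conv)
  have c: "c \<in> car (Ssym Rmin)"
    using cij r by (auto simp: is_fpoly_def)
  have es: "set es1 \<subseteq> car (Ssym Rmin)" "set es2 \<subseteq> car (Ssym Rmin)" "set es3 \<subseteq> car (Ssym Rmin)"
    "map tabs es1 = [ereal (-1), ereal (-2)]" "map tabs es2 = [ereal 1, ereal 2]"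
    "map tabs es3 = [ereal 0, ereal 1]"
    by (simp_all add: es1_def es2_def es3_def Ssym_car tabs_def)
  have "tabs (?t c [i, j] es1) = tabs c + ereal (- real i - real j * 2)"
    "tabs (?t c [i, j] es2) = tabs c + ereal (real i + real j * 2)"
    "tabs (?t c [i, j] es3) = tabs c + ereal (real j)"
    using tabs_smul_mono_eval[OF c es(1)] tabs_smul_mono_eval[OF c es(2)] tabs_smul_mono_eval[OF c es(3)]
    by (simp_all add: es mono_eval_Rmin_two)
  moreover have "ereal (-2) \<le> tabs (?t c [i, j] es1)" "ereal 2 \<le> tabs (?t c [i, j] es2)"
    using positive_poly_eval_Ssym_Rmin(1)[OF pos1] positive_poly_eval_Ssym_Rmin(1)[OF pos2] cij(1)
    by (fastforce simp: tabs_def)+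
  moreover have "ereal 2 < tabs (?t c [i, j] es2)" if "1 \<le> i"
  proof -
    have "fst (?t c [i, j] es2) = snd (?t c [i, j] es2)"
      using that balanced_mono_eval_Ssym_Rmin[of "(ereal 1, ereal 1)" "i - 1" "[j]" "[(\<infinity>, ereal 2)]"]
      by (simp add: es2_def balanced_smul_Ssym_Rmin)
    then show ?thesis
      using positive_poly_eval_Ssym_Rmin(1)[OF pos2] cij(1) by (fastforce simp: tabs_def)
  qed
  moreover have "tabs (?t c [i, j] es3) \<le> ereal 0"
    using cij(2) by (simp add: tabs_def)
  moreover have "tabs c \<noteq> -\<infinity>"
    using c by (auto simp: Ssym_car tabs_def min_def)
  ultimately show False
    by (cases "tabs c"; cases "1 \<le> i") auto
qed

theorem not_fully_elementary_Symz_Rmax: "\<not> fully_elementary (Symz Rmax)"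
  using srng_iso.fully_elementary_Symz_iso[OF srng_iso_Rmax_Rmin sim_congruence_Rmin]
    not_fully_elementary_Symz_Rmin by blast

theorem theorem7p1:
  shows "fully_elementary Rmin \<and> fully_elementary Rmax \<and>
         \<not> fully_elementary (Symz Rmin) \<and> \<not> fully_elementary (Symz Rmax)"
  using fully_elementary_Rmin fully_elementary_Rmax not_fully_elementary_Symz_Rmin
    not_fully_elementary_Symz_Rmax by blast

end
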